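(* Let $d\ge1$, $K>0$, $U$ a non-negative polynomial of degree $4$ with strictly positive leading coefficient, and let $\omega$ be a Borel probability measure on $\mathcal{X}=(\mathbb{R}^2)^{\mathbb{Z}^d}$ for which there is a constant $C_\omega>0$ such that, for all sufficiently small $\lambda>0$, $$\omega\bigl(e^{\lambda W_{\nu,k}}\bigr)\le e^{C_\omega(2k+1)^d}\qquad\forall\,\nu\in\mathbb{Z}^d,\ \forall\,k\in\mathbb{N}.$$ Then, for all sufficiently small $\lambda>0$, $$\lim_{N\to+\infty}e^{\lambda N}\,\omega(Q>N)=0;$$ in particular $\omega(\{x:Q(x)<\infty\})=1$.
   Context: Configurations are $x=\{(q_i,p_i)\}_{i\in\mathbb{Z}^d}$ with the product topology on $\mathcal{X}$; $|i-j|=\sum_\ell|i_\ell-j_\ell|$. For $\nu\in\mathbb{Z}^d$, $k\in\mathbb{N}$, $\Lambda_{\nu,k}$ is the cube of center $\nu$ and side $2k+1$, $W_{\nu,k}(x)=\sum_{i\in\Lambda_{\nu,k}}\{p_i^2/2+U(q_i)+1\}+\sum_{i,j\in\Lambda_{\nu,k},|j-i|=1}\frac K4(q_i-q_j)^2$, and $Q(x)=\sup_{\nu\in\mathbb{Z}^d}\sup_{k\in\mathbb{N},\,k>\log^{1/d}(e+|\nu|)}W_{\nu,k}(x)/(2k+1)^d$. *)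

theory Defs
  imports "HOL-Probability.Probability" "HOL-Computational_Algebra.Polynomial"
begin

text \<open>Sites of the lattice Z^d are vectors int^'d (d = CARD('d) >= 1).
  A configuration x assigns to each site i the pair (q_i, p_i) = x i.\<close>

type_synonym 'd config = "(int^('d::finite)) \<Rightarrow> real \<times> real"

definition l1norm :: "int^('d::finite) \<Rightarrow> int" where
  "l1norm i = (\<Sum>l\<in>UNIV. \<bar>i $ l\<bar>)"

definition cube :: "int^('d::finite) \<Rightarrow> nat \<Rightarrow> (int^'d) set" where
  "cube \<nu> k = {i. \<forall>l. \<bar>i $ l - \<nu> $ l\<bar> \<le> int k}"

definition Wloc :: "real \<Rightarrow> real poly \<Rightarrow> int^('d::finite) \<Rightarrow> nat \<Rightarrow> 'd config \<Rightarrow> real" where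
  "Wloc K U \<nu> k x =
     (\<Sum>i\<in>cube \<nu> k. (snd (x i))\<^sup>2 / 2 + poly U (fst (x i)) + 1)
   + (\<Sum>(i,j)\<in>{(i,j). i \<in> cube \<nu> k \<and> j \<in> cube \<nu> k \<and> l1norm (j - i) = 1}.
        K / 4 * (fst (x i) - fst (x j))\<^sup>2)"

definition Qfun :: "real \<Rightarrow> real poly \<Rightarrow> ('d::finite) config \<Rightarrow> ereal" where
  "Qfun K U x =
     (SUP p \<in> {(\<nu>::int^'d, k::nat).
                 real k > (ln (exp 1 + real_of_int (l1norm \<nu>))) powr (1 / real CARD('d))}.
        ereal (Wloc K U (fst p) (snd p) x / (2 * real (snd p) + 1) ^ CARD('d)))"

end

theory Submission
  imports Defs
begin

(* Q exceeds N only if some admissible block (\<nu>, k) carries energy W > N (2k+1)^d. Admissibility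
   forces |\<nu>| < exp (k^d), so there are at most 3^d exp (d k^d) such blocks at scale k, whereas the
   Chernoff bound at rate l turns the exponential moment hypothesis into the tail bound
   exp ((C - l N) (2k+1)^d) for each of them. Once l N exceeds C + d + 1 the volume (2k+1)^d in the
   exponent beats the number of blocks, and the union bound over all blocks is a geometric series
   in k of size O(exp (-l N)). *)

lemma bij_betw_vec_nth_cube:
  "bij_betw vec_nth (cube \<nu> k) (\<Pi>\<^sub>E l\<in>UNIV. {\<nu> $ l - int k .. \<nu> $ l + int k})"
proof (rule bij_betw_imageI)
  show "inj_on vec_nth (cube \<nu> k)" by (simp add: inj_on_def vec_eq_iff)
  show "vec_nth ` cube \<nu> k = (\<Pi>\<^sub>E l\<in>UNIV. {\<nu> $ l - int k .. \<nu> $ l + int k})"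
  proof (intro equalityI subsetI)
    fix f assume "f \<in> vec_nth ` cube \<nu> k"
    then obtain i where i: "i \<in> cube \<nu> k" and f: "f = vec_nth i" by blast
    have bound: "\<bar>i $ l - \<nu> $ l\<bar> \<le> int k" for l using i by (simp add: cube_def)
    have "i $ l \<in> {\<nu> $ l - int k .. \<nu> $ l + int k}" for l
      using bound[of l] by (simp add: abs_le_iff)
    then show "f \<in> (\<Pi>\<^sub>E l\<in>UNIV. {\<nu> $ l - int k .. \<nu> $ l + int k})"
      by (simp add: f PiE_iff)
  next
    fix f assume f: "f \<in> (\<Pi>\<^sub>E l\<in>UNIV. {\<nu> $ l - int k .. \<nu> $ l + int k})"
    have "\<bar>f l - \<nu> $ l\<bar> \<le> int k" for l using PiE_mem[OF f, of l] by (simp add: abs_le_iff)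
    then have "vec_lambda f \<in> cube \<nu> k" by (simp add: cube_def)
    then show "f \<in> vec_nth ` cube \<nu> k" by (rule rev_image_eqI) (simp add: fun_eq_iff)
  qed
qed

lemma finite_cube: "finite (cube \<nu> k)"
  unfolding bij_betw_finite[OF bij_betw_vec_nth_cube] by (intro finite_PiE) auto

lemma card_cube: "card (cube (\<nu>::int^('d::finite)) k) = (2 * k + 1) ^ CARD('d)"
proof -
  have "card (cube \<nu> k) = (\<Prod>l\<in>UNIV. card {\<nu> $ l - int k .. \<nu> $ l + int k})"
    using bij_betw_same_card[OF bij_betw_vec_nth_cube] by (simp add: card_PiE)
  also have "\<dots> = (2 * k + 1) ^ CARD('d)" by (simp add: nat_add_distrib nat_mult_distrib)
  finally show ?thesis .
qed

definition admissible_centres :: "nat \<Rightarrow> (int^('d::finite)) set" where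
  "admissible_centres k =
     {\<nu>. real k > (ln (exp 1 + real_of_int (l1norm \<nu>))) powr (1 / real CARD('d))}"

lemma l1norm_nonneg: "l1norm \<nu> \<ge> 0"
  unfolding l1norm_def by (simp add: sum_nonneg)

lemma abs_component_le_l1norm: "\<bar>\<nu> $ l\<bar> \<le> l1norm \<nu>"
  unfolding l1norm_def by (rule member_le_sum) auto

lemma admissible_centres_subset_cube:
  "admissible_centres k \<subseteq> cube (0::int^('d::finite)) (nat \<lfloor>exp (real k ^ CARD('d))\<rfloor>)"
proof
  fix \<nu> :: "int^'d" assume "\<nu> \<in> admissible_centres k"
  then have adm: "(ln (exp 1 + real_of_int (l1norm \<nu>))) powr (1 / real CARD('d)) < real k"
    by (simp add: admissible_centres_def)
  define L where "L = ln (exp 1 + real_of_int (l1norm \<nu>))"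
  have "exp 1 + real_of_int (l1norm \<nu>) > 1"
    using l1norm_nonneg[of \<nu>] by (smt (verit) one_less_exp_iff of_int_nonneg)
  then have L_pos: "L > 0" by (simp add: L_def)
  have "L = (L powr (1 / real CARD('d))) ^ CARD('d)"
    using L_pos by (simp add: powr_realpow[symmetric] powr_powr)
  also have "\<dots> < real k ^ CARD('d)"
    using adm L_pos by (intro power_strict_mono) (auto simp: L_def)
  finally have "exp L < exp (real k ^ CARD('d))" by simp
  then have "exp 1 + real_of_int (l1norm \<nu>) < exp (real k ^ CARD('d))"
    using l1norm_nonneg[of \<nu>] by (simp add: L_def add_pos_nonneg)
  then have "real_of_int \<bar>\<nu> $ l\<bar> \<le> exp (real k ^ CARD('d))" for l
    using abs_component_le_l1norm[of \<nu> l] by (smt (verit) exp_gt_zero of_int_le_iff)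
  then show "\<nu> \<in> cube 0 (nat \<lfloor>exp (real k ^ CARD('d))\<rfloor>)"
    unfolding cube_def by (simp add: le_floor_iff)
qed

lemma finite_admissible_centres: "finite (admissible_centres k)"
  using admissible_centres_subset_cube finite_cube by (rule finite_subset)

lemma cube_size_times_exp_decay_le:
  fixes d k R :: nat and s :: real
  assumes d_pos: "d \<ge> 1" and s_ge: "s \<ge> real d + 1" and R_le: "real R \<le> exp (real k ^ d)"
  shows "(2 * real R + 1) ^ d * exp (- s * (2 * real k + 1) ^ d)
           \<le> 3 ^ d * exp (real d - s) * exp (-1) ^ k"
proof -
  define m where "m = (2 * real k + 1) ^ d"
  have "1 \<le> exp (real k ^ d)" by simp
  then have "2 * real R + 1 \<le> 3 * exp (real k ^ d)" using R_le by linarith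
  then have "(2 * real R + 1) ^ d \<le> (3 * exp (real k ^ d)) ^ d"
    by (rule power_mono) simp
  also have "\<dots> = 3 ^ d * exp (real d * real k ^ d)"
    by (simp add: power_mult_distrib exp_of_nat_mult)
  finally have size_le: "(2 * real R + 1) ^ d \<le> 3 ^ d * exp (real d * real k ^ d)" .
  have m_ge_power: "real k ^ d \<le> m" unfolding m_def by (intro power_mono) auto
  have m_ge_base: "2 * real k + 1 \<le> m" unfolding m_def using d_pos by (intro self_le_power) auto
  have "0 \<le> (s - real d - 1) * (m - 1)" using s_ge m_ge_base by simp
  then have "(s - real d) + (m - 1) \<le> (s - real d) * m" by (simp add: algebra_simps)
  moreover have "real d * real k ^ d \<le> real d * m" using m_ge_power by (simp add: mult_left_mono)
  ultimately have exponent_le: "real d * real k ^ d - s * m \<le> real d - s - real k"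
    using m_ge_base by (simp add: algebra_simps)
  have "(2 * real R + 1) ^ d * exp (- s * m) \<le> 3 ^ d * exp (real d * real k ^ d) * exp (- s * m)"
    using size_le by (rule mult_right_mono) simp
  also have "\<dots> = 3 ^ d * exp (real d * real k ^ d - s * m)" by (simp add: exp_add[symmetric])
  also have "\<dots> \<le> 3 ^ d * exp (real d - s - real k)" using exponent_le by simp
  also have "\<dots> = 3 ^ d * exp (real d - s) * exp (-1) ^ k"
    by (simp add: exp_diff exp_add exp_minus exp_of_nat_mult[symmetric] field_simps)
  finally show ?thesis unfolding m_def .
qed

lemma tendsto_exp_affine_at_top:
  fixes a b :: real
  assumes "a > 0"
  shows "((\<lambda>x. exp (b - a * x)) \<longlongrightarrow> 0) at_top"
proof -
  have "filterlim (\<lambda>x. - b + a * x) at_top at_top"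
    using assms by (intro filterlim_tendsto_add_at_top[OF tendsto_const]
        filterlim_tendsto_pos_mult_at_top[OF tendsto_const] filterlim_ident)
  then have "filterlim (\<lambda>x. b - a * x) at_bot at_top"
    by (simp add: filterlim_uminus_at_top)
  then show ?thesis by (rule filterlim_compose[OF exp_at_bot])
qed

lemma borel_measurable_Wloc: "Wloc K U \<nu> k \<in> borel_measurable (borel :: ('d::finite) config measure)"
proof (rule borel_measurable_continuous_onI)
  show "continuous_on UNIV (Wloc K U \<nu> k :: 'd config \<Rightarrow> real)"
    unfolding Wloc_def case_prod_unfold
    by (intro continuous_intros continuous_on_compose2[OF continuous_on_product_coordinates]) auto
qed

lemma Qfun_greater_eq:
  "{x :: ('d::finite) config. Qfun K U x > ereal N} =
     (\<Union>k. \<Union>\<nu>\<in>admissible_centres k. {x. Wloc K U \<nu> k x > N * (2 * real k + 1) ^ CARD('d)})"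
  by (auto simp: Qfun_def admissible_centres_def less_SUP_iff pos_less_divide_eq)

lemma Wloc_greater_measurable: "{x :: ('d::finite) config. Wloc K U \<nu> k x > c} \<in> sets borel"
  using borel_measurable_Wloc[of K U \<nu> k] by (simp add: borel_measurable_iff_greater)

lemma Qfun_greater_measurable: "{x :: ('d::finite) config. Qfun K U x > ereal N} \<in> sets borel"
  unfolding Qfun_greater_eq
  by (intro sets.countable_UN image_subsetI sets.finite_UN finite_admissible_centres
      Wloc_greater_measurable)

context
  fixes \<omega> :: "('d::finite) config measure" and K l C :: real and U :: "real poly"
  assumes sets_\<omega>: "sets \<omega> = sets borel" and l_pos: "l > 0"
    and exp_moment_bound: "\<And>\<nu> k. (\<integral>\<^sup>+ x. ennreal (exp (l * Wloc K U \<nu> k x)) \<partial>\<omega>)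
          \<le> ennreal (exp (C * (2 * real k + 1) ^ CARD('d)))"
begin

lemma emeasure_Wloc_greater_le:
  "emeasure \<omega> {x. Wloc K U \<nu> k x > t} \<le> ennreal (exp (C * (2 * real k + 1) ^ CARD('d) - l * t))"
proof -
  have space_\<omega>: "space \<omega> = UNIV" using sets_eq_imp_space_eq[OF sets_\<omega>] by simp
  have [measurable]: "Wloc K U \<nu> k \<in> borel_measurable \<omega>"
    using borel_measurable_Wloc measurable_cong_sets[OF sets_\<omega> refl] by blast
  have "{x\<in>space \<omega>. Wloc K U \<nu> k x \<ge> t} \<in> sets \<omega>" by measurable
  then have "emeasure \<omega> {x. Wloc K U \<nu> k x > t}
      \<le> emeasure \<omega> {x\<in>space \<omega>. Wloc K U \<nu> k x \<ge> t}"
    by (rule emeasure_mono[rotated]) (auto simp: space_\<omega>)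
  also have "\<dots> \<le> ennreal (exp (- l * t))
      * (\<integral>\<^sup>+ x. ennreal (exp (l * Wloc K U \<nu> k x)) * indicator (space \<omega>) x \<partial>\<omega>)"
    using l_pos by (intro Chernoff_ineq_nn_integral_ge) auto
  also have "(\<integral>\<^sup>+ x. ennreal (exp (l * Wloc K U \<nu> k x)) * indicator (space \<omega>) x \<partial>\<omega>)
      = (\<integral>\<^sup>+ x. ennreal (exp (l * Wloc K U \<nu> k x)) \<partial>\<omega>)"
    by (intro nn_integral_cong) simp
  also have "ennreal (exp (- l * t)) * \<dots>
      \<le> ennreal (exp (- l * t)) * ennreal (exp (C * (2 * real k + 1) ^ CARD('d)))"
    using exp_moment_bound by (rule mult_left_mono) simp
  also have "\<dots> = ennreal (exp (C * (2 * real k + 1) ^ CARD('d) - l * t))"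
    by (simp add: ennreal_mult[symmetric] exp_add[symmetric])
  finally show ?thesis .
qed

lemma emeasure_admissible_layer_le:
  assumes lN: "l * N \<ge> C + real CARD('d) + 1"
  shows "emeasure \<omega>
             (\<Union>\<nu>\<in>admissible_centres k. {x. Wloc K U \<nu> k x > N * (2 * real k + 1) ^ CARD('d)})
           \<le> ennreal (3 ^ CARD('d) * exp (C + real CARD('d) - l * N) * exp (-1) ^ k)"
proof -
  define m where "m = (2 * real k + 1) ^ CARD('d)"
  define R where "R = nat \<lfloor>exp (real k ^ CARD('d))\<rfloor>"
  have "real (card (admissible_centres k :: (int^'d) set)) \<le> real (card (cube (0::int^'d) R))"
    unfolding R_def of_nat_le_iff by (intro card_mono finite_cube admissible_centres_subset_cube)
  also have "real (card (cube (0::int^'d) R)) = (2 * real R + 1) ^ CARD('d)"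
    by (simp add: card_cube add.commute)
  finally have card_le: "real (card (admissible_centres k :: (int^'d) set)) \<le> (2 * real R + 1) ^ CARD('d)"
    by simp
  have "emeasure \<omega> (\<Union>\<nu>\<in>admissible_centres k. {x. Wloc K U \<nu> k x > N * m})
      \<le> (\<Sum>\<nu>\<in>admissible_centres k. emeasure \<omega> {x. Wloc K U \<nu> k x > N * m})"
    using finite_admissible_centres Wloc_greater_measurable sets_\<omega>
    by (intro emeasure_subadditive_finite) auto
  also have "\<dots> \<le> (\<Sum>\<nu>\<in>(admissible_centres k :: (int^'d) set).
                       ennreal (exp (C * m - l * (N * m))))"
    unfolding m_def by (intro sum_mono emeasure_Wloc_greater_le)
  also have "\<dots> = ennreal (real (card (admissible_centres k :: (int^'d) set)) * exp (- (l * N - C) * m))"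
    by (simp add: ennreal_of_nat_eq_real_of_nat ennreal_mult algebra_simps)
  also have "\<dots> \<le> ennreal ((2 * real R + 1) ^ CARD('d) * exp (- (l * N - C) * m))"
    using card_le by (intro ennreal_leI mult_right_mono) auto
  also have "\<dots> \<le> ennreal (3 ^ CARD('d) * exp (real CARD('d) - (l * N - C)) * exp (-1) ^ k)"
  proof (intro ennreal_leI)
    have "real R \<le> exp (real k ^ CARD('d))" unfolding R_def by simp
    then show "(2 * real R + 1) ^ CARD('d) * exp (- (l * N - C) * m)
        \<le> 3 ^ CARD('d) * exp (real CARD('d) - (l * N - C)) * exp (-1) ^ k"
      unfolding m_def using lN by (intro cube_size_times_exp_decay_le) (auto simp: Suc_le_eq)
  qed
  finally show ?thesis unfolding m_def by (simp add: algebra_simps)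
qed

lemma emeasure_Qfun_greater_le:
  assumes lN: "l * N \<ge> C + real CARD('d) + 1"
  shows "emeasure \<omega> {x. Qfun K U x > ereal N}
           \<le> ennreal (3 ^ CARD('d) * exp (C + real CARD('d) - l * N) / (1 - exp (-1)))"
proof -
  define c where "c = 3 ^ CARD('d) * exp (C + real CARD('d) - l * N)"
  have "emeasure \<omega> {x. Qfun K U x > ereal N}
      \<le> (\<Sum>k. emeasure \<omega>
            (\<Union>\<nu>\<in>admissible_centres k. {x. Wloc K U \<nu> k x > N * (2 * real k + 1) ^ CARD('d)}))"
    unfolding Qfun_greater_eq
    by (intro emeasure_subadditive_countably image_subsetI sets.finite_UN finite_admissible_centres)
      (simp add: sets_\<omega> Wloc_greater_measurable)
  also have "\<dots> \<le> (\<Sum>k. ennreal (c * exp (-1) ^ k))"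
    unfolding c_def using lN by (intro suminf_le emeasure_admissible_layer_le) auto
  also have "\<dots> = ennreal (\<Sum>k. c * exp (-1) ^ k)"
    by (intro suminf_ennreal2 summable_mult summable_geometric) (auto simp: c_def)
  also have "(\<Sum>k. c * exp (-1) ^ k) = c / (1 - exp (-1))"
    by (subst suminf_mult) (auto intro!: summable_geometric simp: suminf_geometric divide_inverse)
  finally show ?thesis unfolding c_def .
qed

lemma tendsto_exp_mult_measure_Qfun_greater:
  "((\<lambda>N. exp (l / 2 * N) * measure \<omega> {x. Qfun K U x > ereal N}) \<longlongrightarrow> 0) at_top"
proof (rule tendsto_sandwich)
  define G where "G = 3 ^ CARD('d) / (1 - exp (-1::real))"
  show "\<forall>\<^sub>F N in at_top. 0 \<le> exp (l / 2 * N) * measure \<omega> {x. Qfun K U x > ereal N}" by simp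
  show "((\<lambda>N. G * exp (C + real CARD('d) - l / 2 * N)) \<longlongrightarrow> 0) at_top"
    using l_pos by (intro tendsto_mult_right_zero tendsto_exp_affine_at_top) simp
  show "\<forall>\<^sub>F N in at_top. exp (l / 2 * N) * measure \<omega> {x. Qfun K U x > ereal N}
          \<le> G * exp (C + real CARD('d) - l / 2 * N)"
  proof (rule eventually_at_top_linorderI)
    fix N assume "N \<ge> (C + real CARD('d) + 1) / l"
    then have "l * N \<ge> C + real CARD('d) + 1" using l_pos by (simp add: field_simps)
    then have "measure \<omega> {x. Qfun K U x > ereal N}
        \<le> 3 ^ CARD('d) * exp (C + real CARD('d) - l * N) / (1 - exp (-1))"
      unfolding measure_def by (intro enn2real_leI emeasure_Qfun_greater_le) auto
    then have "exp (l / 2 * N) * measure \<omega> {x. Qfun K U x > ereal N}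
        \<le> exp (l / 2 * N) * (3 ^ CARD('d) * exp (C + real CARD('d) - l * N) / (1 - exp (-1)))"
      by (rule mult_left_mono) simp
    also have "\<dots> = G * exp (C + real CARD('d) - l / 2 * N)"
      unfolding G_def by (simp add: exp_add[symmetric] field_simps)
    finally show "exp (l / 2 * N) * measure \<omega> {x. Qfun K U x > ereal N}
        \<le> G * exp (C + real CARD('d) - l / 2 * N)" .
  qed
qed simp

lemma measure_Qfun_greater_tendsto_0:
  "((\<lambda>N. measure \<omega> {x. Qfun K U x > ereal N}) \<longlongrightarrow> 0) at_top"
proof (rule tendsto_sandwich)
  show "\<forall>\<^sub>F N in at_top. 0 \<le> measure \<omega> {x. Qfun K U x > ereal N}" by simp
  show "\<forall>\<^sub>F N in at_top. measure \<omega> {x. Qfun K U x > ereal N}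
      \<le> exp (l / 2 * N) * measure \<omega> {x. Qfun K U x > ereal N}"
  proof (rule eventually_at_top_linorderI)
    fix N :: real assume "N \<ge> 0"
    then have "1 \<le> exp (l / 2 * N)" using l_pos by simp
    from mult_right_mono[OF this measure_nonneg]
    show "measure \<omega> {x. Qfun K U x > ereal N} \<le> exp (l / 2 * N) * measure \<omega> {x. Qfun K U x > ereal N}"
      by simp
  qed
  show "((\<lambda>N. exp (l / 2 * N) * measure \<omega> {x. Qfun K U x > ereal N}) \<longlongrightarrow> 0) at_top"
    by (rule tendsto_exp_mult_measure_Qfun_greater)
qed simp

end

lemma (in prob_space) prob_less_PInf_eq_1:
  fixes f :: "'a \<Rightarrow> ereal"
  assumes events: "\<And>N. {x\<in>space M. f x > ereal N} \<in> events"
    and tail: "((\<lambda>N. prob {x\<in>space M. f x > ereal N}) \<longlongrightarrow> 0) at_top"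
  shows "prob {x\<in>space M. f x < \<infinity>} = 1"
proof -
  let ?A = "{x\<in>space M. f x < \<infinity>}"
  have "f x < \<infinity> \<longleftrightarrow> (\<exists>n::nat. \<not> f x > ereal (real n))" for x
    by (cases "f x") (use real_arch_simple in \<open>auto simp: not_less\<close>)
  then have "?A = (\<Union>n::nat. space M - {x\<in>space M. f x > ereal (real n)})" by auto
  then have A_event: "?A \<in> events" using events by auto
  have "prob (space M - ?A) \<le> prob {x\<in>space M. f x > ereal N}" for N
    using events by (intro finite_measure_mono) auto
  then have "prob (space M - ?A) \<le> 0"
    using tail by (intro tendsto_lowerbound) auto
  then show ?thesis using prob_compl[OF A_event] prob_le_1[of ?A] measure_nonneg[of M "space M - ?A"]
    by linarith
qed

theorem mainTheorem5:
  fixes K :: real and U :: "real poly" and \<omega> :: "('d::finite) config measure"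
  assumes K_pos: "K > 0"
    and U_deg: "degree U = 4" and U_lead: "lead_coeff U > 0"
    and U_nonneg: "\<And>y. poly U y \<ge> 0"
    and prob: "prob_space \<omega>" and borel: "sets \<omega> = sets borel"
    and expbound: "\<exists>C>0. \<forall>\<^sub>F l in at_right (0::real). \<forall>\<nu> k.
        (\<integral>\<^sup>+ x. ennreal (exp (l * Wloc K U \<nu> k x)) \<partial>\<omega>)
          \<le> ennreal (exp (C * (2 * real k + 1) ^ CARD('d)))"
  shows "(\<forall>\<^sub>F l in at_right (0::real).
           ((\<lambda>N. exp (l * N) * measure \<omega> {x. Qfun K U x > ereal N}) \<longlongrightarrow> 0) at_top)
         \<and> measure \<omega> {x. Qfun K U x < \<infinity>} = 1"
proof -
  interpret prob_space \<omega> by (rule prob)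
  have space_\<omega>: "space \<omega> = UNIV" using sets_eq_imp_space_eq[OF borel] by simp
  obtain C b where "b > 0" and bound: "\<And>l \<nu> k. 0 < l \<Longrightarrow> l < b \<Longrightarrow>
      (\<integral>\<^sup>+ x. ennreal (exp (l * Wloc K U \<nu> k x)) \<partial>\<omega>)
        \<le> ennreal (exp (C * (2 * real k + 1) ^ CARD('d)))"
    using expbound unfolding eventually_at_right_field by blast
  have decay: "((\<lambda>N. exp (l * N) * measure \<omega> {x. Qfun K U x > ereal N}) \<longlongrightarrow> 0) at_top"
    if "0 < l" "l < b / 2" for l
    using tendsto_exp_mult_measure_Qfun_greater[OF borel, of "2 * l" K U C] bound that by simp
  have "\<forall>\<^sub>F l in at_right 0.
      ((\<lambda>N. exp (l * N) * measure \<omega> {x. Qfun K U x > ereal N}) \<longlongrightarrow> 0) at_top"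
    unfolding eventually_at_right_field using decay \<open>b > 0\<close> by (intro exI[of _ "b / 2"]) auto
  moreover have "((\<lambda>N. measure \<omega> {x. Qfun K U x > ereal N}) \<longlongrightarrow> 0) at_top"
    using \<open>b > 0\<close>
    by (intro measure_Qfun_greater_tendsto_0[OF borel, where l = "b / 2" and C = C] bound) auto
  then have "prob {x\<in>space \<omega>. Qfun K U x < \<infinity>} = 1"
    using Qfun_greater_measurable borel by (intro prob_less_PInf_eq_1) (simp_all add: space_\<omega>)
  ultimately show ?thesis unfolding space_\<omega> by simp
qed

end
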